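(* Every finite nonempty inverse semigroup is $K$-thin.
   Context: An inverse semigroup is a semigroup in which every element $x$ has a unique $y$ with $xyx=x$ and $yxy=y$. For a finite nonempty semigroup $S$, the minimal ideal $K(S)$ is the intersection of all nonempty two-sided ideals of $S$. A Rees matrix semigroup $\mathcal{M}(H;I,J;p)$, for sets $I,J$, a group $H$ and a function $p\colon J\times I\to H$, is the set $I\times H\times J$ with product $(i,h,j)(i',h',j')=(i,h\,p(j,i')\,h',j')$. It is known that $K(S)$ is always isomorphic to such a Rees matrix semigroup with $H$ a finite group and $p$ normalized (i.e. $p(j_0,i)=e_H$ and $p(j,i_0)=e_H$ for some fixed $i_0\in I$, $j_0\in J$ and all $i,j$). $S$ is called $K$-thin if $K(S)$ has such a normalized Rees matrix structure with $|I|=1$ or $|J|=1$; equivalently, $K(S)$ is left-simple or right-simple. *)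

theory Defs
  imports Main
begin

text \<open>A semigroup is modelled as a type of class semigroup_mult; the whole type is the semigroup.\<close>

definition inverse_semigroup :: "('a::semigroup_mult) itself \<Rightarrow> bool" where
  "inverse_semigroup _ \<longleftrightarrow> (\<forall>x::'a. \<exists>!y. x * y * x = x \<and> y * x * y = y)"

definition two_sided_ideal :: "('a::semigroup_mult) set \<Rightarrow> bool" where
  "two_sided_ideal A \<longleftrightarrow> A \<noteq> {} \<and> (\<forall>s a. a \<in> A \<longrightarrow> s * a \<in> A \<and> a * s \<in> A)"

definition minimal_ideal :: "('a::semigroup_mult) set" where
  "minimal_ideal = \<Inter> {A. two_sided_ideal A}"

definition left_ideal_of :: "('a::semigroup_mult) set \<Rightarrow> 'a set \<Rightarrow> bool" where
  "left_ideal_of K L \<longleftrightarrow> L \<noteq> {} \<and> L \<subseteq> K \<and> (\<forall>k\<in>K. \<forall>l\<in>L. k * l \<in> L)"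

definition right_ideal_of :: "('a::semigroup_mult) set \<Rightarrow> 'a set \<Rightarrow> bool" where
  "right_ideal_of K R \<longleftrightarrow> R \<noteq> {} \<and> R \<subseteq> K \<and> (\<forall>k\<in>K. \<forall>r\<in>R. r * k \<in> R)"

definition left_simple :: "('a::semigroup_mult) set \<Rightarrow> bool" where
  "left_simple K \<longleftrightarrow> (\<forall>L. left_ideal_of K L \<longrightarrow> L = K)"

definition right_simple :: "('a::semigroup_mult) set \<Rightarrow> bool" where
  "right_simple K \<longleftrightarrow> (\<forall>R. right_ideal_of K R \<longrightarrow> R = K)"

definition K_thin :: "('a::semigroup_mult) itself \<Rightarrow> bool" where
  "K_thin _ \<longleftrightarrow> left_simple (minimal_ideal :: 'a set) \<or> right_simple (minimal_ideal :: 'a set)"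

end

theory Submission
  imports Defs
begin

text \<open>In an inverse semigroup idempotents commute, so the product of two idempotents of
  the minimal ideal \<open>K\<close> is an idempotent of \<open>K\<close> lying below both. In a finite semigroup an
  idempotent \<open>e\<close> of \<open>K\<close> is primitive: if \<open>g \<le> e\<close> then \<open>e \<in> SgS\<close>, so \<open>e = pq\<close> with
  \<open>p \<in> eSg\<close>, \<open>q \<in> gSe\<close>, and \<open>z \<mapsto> qzp\<close> injects \<open>eSe\<close> into its subset \<open>gSg\<close>, forcing
  \<open>g = e\<close>. Hence \<open>K\<close> has a single idempotent, which equals both \<open>k\<inverse>k\<close> and \<open>l\<inverse>l\<close>
  for all \<open>k, l \<in> K\<close>; so \<open>k = (kl\<inverse>)l\<close> and \<open>K\<close> is left simple.\<close>

definition semigroup_inv :: "'a::semigroup_mult \<Rightarrow> 'a" where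
  "semigroup_inv x = (THE y. x * y * x = x \<and> y * x * y = y)"

lemma inverse_semigroup_inv:
  assumes "inverse_semigroup TYPE('a::semigroup_mult)"
  shows "x * semigroup_inv x * x = x"
    and "semigroup_inv x * x * semigroup_inv x = (semigroup_inv x :: 'a)"
proof -
  have "\<exists>!y. x * y * x = x \<and> y * x * y = y"
    using assms by (simp add: inverse_semigroup_def)
  then have "x * semigroup_inv x * x = x \<and> semigroup_inv x * x * semigroup_inv x = semigroup_inv x"
    unfolding semigroup_inv_def by (rule theI')
  then show "x * semigroup_inv x * x = x" and "semigroup_inv x * x * semigroup_inv x = semigroup_inv x"
    by simp_all
qed

lemma inverse_semigroup_inv_unique:
  assumes "inverse_semigroup TYPE('a::semigroup_mult)"
    and "x * y * x = x" and "y * x * y = (y :: 'a)"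
  shows "y = semigroup_inv x"
proof -
  have "\<exists>!y. x * y * x = x \<and> y * x * y = y"
    using assms(1) by (simp add: inverse_semigroup_def)
  then show ?thesis
    using assms(2,3) inverse_semigroup_inv[OF assms(1)] by blast
qed

lemma inverse_semigroup_inv_idempotent:
  assumes "inverse_semigroup TYPE('a::semigroup_mult)" and "e * e = (e :: 'a)"
  shows "semigroup_inv e = e"
  using inverse_semigroup_inv_unique[OF assms(1), of e e] assms(2) by simp

lemma inverse_semigroup_mult_idempotent:
  assumes I: "inverse_semigroup TYPE('a::semigroup_mult)"
    and e: "e * e = e" and f: "f * f = (f :: 'a)"
  shows "(e * f) * (e * f) = e * f"
proof -
  have ee: "e * (e * x) = e * x" and ff: "f * (f * x) = f * x" for x
    using e f by (simp_all flip: mult.assoc)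
  define z where "z = semigroup_inv (e * f)"
  have z1: "e * f * z * (e * f) = e * f" and z2: "z * (e * f) * z = z"
    using inverse_semigroup_inv[OF I, of "e * f"] by (simp_all add: z_def)
  have z2': "z * (e * (f * (z * x))) = z * x" for x
    using z2 by (metis mult.assoc)
  \<comment> \<open>\<open>w\<close> is a second inverse of \<open>e * f\<close>, and visibly idempotent.\<close>
  define w where "w = f * z * e"
  have w1: "e * f * w * (e * f) = e * f"
    using z1 by (simp add: w_def mult.assoc ee ff)
  have w2: "w * (e * f) * w = w"
    by (simp add: w_def mult.assoc ee ff z2')
  have "w = z"
    unfolding z_def by (rule inverse_semigroup_inv_unique[OF I w1 w2])
  moreover have "w * w = w"
    by (simp add: w_def mult.assoc ee ff z2')
  ultimately have "z * z = z" by simp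
  have "e * f = semigroup_inv z"
    using inverse_semigroup_inv_unique[OF I z2 z1] .
  also have "\<dots> = z"
    using inverse_semigroup_inv_idempotent[OF I \<open>z * z = z\<close>] .
  finally show ?thesis
    using \<open>z * z = z\<close> by simp
qed

lemma inverse_semigroup_idempotents_commute:
  assumes I: "inverse_semigroup TYPE('a::semigroup_mult)"
    and e: "e * e = e" and f: "f * f = (f :: 'a)"
  shows "e * f = f * e"
proof -
  have ee: "e * (e * x) = e * x" and ff: "f * (f * x) = f * x" for x
    using e f by (simp_all flip: mult.assoc)
  have ef: "(e * f) * (e * f) = e * f" and fe: "(f * e) * (f * e) = f * e"
    using inverse_semigroup_mult_idempotent[OF I] e f by blast+
  have "(e * f) * (f * e) * (e * f) = e * f"
    using ef by (simp add: mult.assoc ee ff)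
  moreover have "(f * e) * (e * f) * (f * e) = f * e"
    using fe by (simp add: mult.assoc ee ff)
  ultimately have "f * e = semigroup_inv (e * f)"
    by (rule inverse_semigroup_inv_unique[OF I])
  also have "\<dots> = e * f"
    by (rule inverse_semigroup_inv_idempotent[OF I ef])
  finally show ?thesis by simp
qed

lemma minimal_ideal_mult_left:
    "a \<in> minimal_ideal \<Longrightarrow> s * a \<in> (minimal_ideal :: 'a::semigroup_mult set)"
  and minimal_ideal_mult_right:
    "a \<in> minimal_ideal \<Longrightarrow> a * s \<in> (minimal_ideal :: 'a::semigroup_mult set)"
  unfolding minimal_ideal_def two_sided_ideal_def by blast+

lemma minimal_ideal_subset_principal_ideal:
  "(minimal_ideal :: 'a::semigroup_mult set) \<subseteq> {x * g * y | x y. True}"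
proof -
  have "two_sided_ideal {x * g * y | x y. True}"
    unfolding two_sided_ideal_def by (auto simp: mult.assoc) (metis mult.assoc)+
  then show ?thesis
    unfolding minimal_ideal_def by blast
qed

lemma finite_idempotent_below_eq:
  fixes e g :: "'a::{semigroup_mult, finite}"
  assumes exgy: "e = x * g * y" and e: "e * e = e" and g: "g * g = g"
    and below: "e * g = g" "g * e = g"
  shows "g = e"
proof -
  define p where "p = e * x * g"
  define q where "q = g * y * e"
  have pq: "p * q = e"
  proof -
    have "p * q = e * (x * (g * g) * y) * e"
      by (simp add: p_def q_def mult.assoc)
    also have "\<dots> = e"
      using exgy e g by simp
    finally show ?thesis .
  qed
  let ?eSe = "range (\<lambda>s. e * s * e)"
  have maps_to: "(\<lambda>z. q * z * p) ` ?eSe \<subseteq> ?eSe"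
  proof
    fix u assume "u \<in> (\<lambda>z. q * z * p) ` ?eSe"
    then obtain s where "u = q * (e * s * e) * p" by blast
    moreover have "e * q = q" and "p * e = p"
      using below by (simp_all add: p_def q_def mult.assoc flip: mult.assoc[of e g])
    ultimately have "u = e * (q * (e * s * e) * p) * e"
      by (metis mult.assoc)
    then show "u \<in> ?eSe" by blast
  qed
  have "inj_on (\<lambda>z. q * z * p) ?eSe"
  proof (rule inj_on_inverseI)
    fix z assume "z \<in> ?eSe"
    then obtain s where "z = e * s * e" by blast
    then show "p * (q * z * p) * q = z"
      using pq e by (metis mult.assoc)
  qed
  then have "(\<lambda>z. q * z * p) ` ?eSe = ?eSe"
    using maps_to by (intro endo_inj_surj) auto
  moreover have "e \<in> ?eSe"
    using e by (metis rangeI)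
  ultimately obtain z where "e = q * z * p" by blast
  also have "\<dots> = g * (y * e * z * p)"
    by (simp add: q_def mult.assoc)
  finally have "g * e = e"
    using g by (metis mult.assoc)
  then show ?thesis
    using below by simp
qed

lemma minimal_ideal_idempotent_primitive:
  fixes e g :: "'a::{semigroup_mult, finite}"
  assumes "e \<in> minimal_ideal" and "e * e = e" and "g * g = g"
    and "e * g = g" and "g * e = g"
  shows "g = e"
proof -
  obtain x y where "e = x * g * y"
    using minimal_ideal_subset_principal_ideal assms(1) by blast
  then show ?thesis
    using finite_idempotent_below_eq assms(2-5) by blast
qed

lemma minimal_ideal_idempotent_unique:
  fixes e f :: "'a::{semigroup_mult, finite}"
  assumes I: "inverse_semigroup TYPE('a)"
    and eK: "e \<in> minimal_ideal" and fK: "f \<in> minimal_ideal"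
    and e: "e * e = e" and f: "f * f = f"
  shows "e = f"
proof -
  have comm: "e * f = f * e"
    by (rule inverse_semigroup_idempotents_commute[OF I e f])
  have ef: "(e * f) * (e * f) = e * f"
    by (rule inverse_semigroup_mult_idempotent[OF I e f])
  \<comment> \<open>\<open>e * f\<close> lies below both \<open>e\<close> and \<open>f\<close>.\<close>
  have "e * f = e"
    by (rule minimal_ideal_idempotent_primitive[OF eK e ef])
      (use comm e in \<open>metis mult.assoc\<close>)+
  moreover have "e * f = f"
    by (rule minimal_ideal_idempotent_primitive[OF fK f ef])
      (use comm f in \<open>metis mult.assoc\<close>)+
  ultimately show ?thesis by simp
qed

lemma minimal_ideal_left_simple:
  assumes I: "inverse_semigroup TYPE('a::{semigroup_mult, finite})"
  shows "left_simple (minimal_ideal :: 'a set)"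
  unfolding left_simple_def
proof (intro allI impI)
  fix L :: "'a set"
  assume L: "left_ideal_of minimal_ideal L"
  then obtain l where "l \<in> L" and "l \<in> minimal_ideal"
    unfolding left_ideal_of_def by blast
  have "k \<in> L" if k: "k \<in> minimal_ideal" for k
  proof -
    let ?k' = "semigroup_inv k" and ?l' = "semigroup_inv l"
    have k'k: "?k' * k * (?k' * k) = ?k' * k" and l'l: "?l' * l * (?l' * l) = ?l' * l"
      using inverse_semigroup_inv[OF I] by (metis mult.assoc)+
    have "?k' * k = ?l' * l"
      using minimal_ideal_idempotent_unique[OF I _ _ k'k l'l] minimal_ideal_mult_left
        k \<open>l \<in> minimal_ideal\<close> by blast
    then have "k = (k * ?l') * l"
      using inverse_semigroup_inv(1)[OF I, of k] by (metis mult.assoc)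
    moreover have "k * ?l' \<in> minimal_ideal"
      using k by (rule minimal_ideal_mult_right)
    ultimately show "k \<in> L"
      using L \<open>l \<in> L\<close> unfolding left_ideal_of_def by metis
  qed
  then show "L = minimal_ideal"
    using L unfolding left_ideal_of_def by blast
qed

theorem proposition7p11:
  assumes "inverse_semigroup TYPE('a::{semigroup_mult, finite})"
  shows "K_thin TYPE('a)"
  using minimal_ideal_left_simple[OF assms] unfolding K_thin_def by blast

end
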